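(* Let $d\in\{2,3\}$ and let $(W_n)$ be the simple symmetric random walk on $\mathbb{Z}^d$ started at $0$ (each of the $2d$ neighbours chosen with probability $1/(2d)$), and $X_n=n^{-1/4}W_n$. For $t\in\mathbb{R}^d$ set $\psi_n(t)=\mathbb{E}[e^{\langle t,X_n\rangle}]\exp\!\big(-\tfrac{n^{1/2}\|t\|^2}{2d}\big)$. Then $\psi_n\to\psi$ locally uniformly on $\mathbb{R}^d$ and in $L^1(\mathbb{R}^d)$, and $\psi\in L^1(\mathbb{R}^d)$, where $$\psi(t_1,t_2)=\exp\!\Big(-\frac{t_1^4+t_2^4+6t_1^2t_2^2}{96}\Big)\ (d=2),\qquad \psi(t_1,t_2,t_3)=\exp\!\Big(-\frac{t_1^2t_2^2+t_1^2t_3^2+t_2^2t_3^2}{36}\Big)\ (d=3).$$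
   Context: $\langle u,v\rangle=\sum_i u_iv_i$ and $\|\cdot\|$ is the Euclidean norm on $\mathbb{R}^d$. *)

theory Defs
  imports "HOL-Probability.Probability"
begin

definition srw_step :: "(real ^ 'n::finite) pmf" where
  "srw_step = pmf_of_set ({axis i 1 | i. True} \<union> {axis i (-1) | i. True})"

fun srw :: "nat \<Rightarrow> (real ^ 'n::finite) pmf" where
  "srw 0 = return_pmf 0"
| "srw (Suc n) = bind_pmf (srw n) (\<lambda>w. map_pmf (\<lambda>s. w + s) srw_step)"

definition psi_n :: "nat \<Rightarrow> real ^ 'n::finite \<Rightarrow> real" where
  "psi_n n t = measure_pmf.expectation (srw n)
       (\<lambda>w. exp (t \<bullet> (real n powr (-1/4) *\<^sub>R w)))
     * exp (- sqrt (real n) * (norm t)\<^sup>2 / (2 * real CARD('n)))"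

definition psi2 :: "real ^ 2 \<Rightarrow> real" where
  "psi2 t = exp (- ((t$1)^4 + (t$2)^4 + 6 * (t$1)\<^sup>2 * (t$2)\<^sup>2) / 96)"

definition psi3 :: "real ^ 3 \<Rightarrow> real" where
  "psi3 t = exp (- ((t$1)\<^sup>2 * (t$2)\<^sup>2 + (t$1)\<^sup>2 * (t$3)\<^sup>2 + (t$2)\<^sup>2 * (t$3)\<^sup>2) / 36)"

definition srw_conv :: "(real ^ 'n::finite \<Rightarrow> real) \<Rightarrow> bool" where
  "srw_conv psi \<longleftrightarrow>
     (\<forall>K :: (real ^ 'n) set. compact K \<longrightarrow> uniform_limit K (\<lambda>n. psi_n n :: real ^ 'n \<Rightarrow> real) psi sequentially)
   \<and> integrable lborel psi
   \<and> (\<forall>\<^sub>F n in sequentially. integrable lborel (psi_n n :: real ^ 'n \<Rightarrow> real))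
   \<and> ((\<lambda>n. LINT (t :: real ^ 'n)|lborel. \<bar>psi_n n t - psi t\<bar>) \<longlongrightarrow> 0) sequentially"

end

theory Submission
  imports Defs
begin

text \<open>
  Write \<open>r\<^sub>n = n\<^sup>-\<^sup>1\<^sup>/\<^sup>4\<close>.  Since \<open>W\<^sub>n\<close> is a sum of \<open>n\<close> independent steps,
  \<open>psi_n t = H (r\<^sub>n t)\<^sup>n\<close> where \<open>H s = M(s) exp (-|s|\<^sup>2/(2d))\<close> and \<open>M(s) = (1/d) \<Sum>\<^sub>i cosh s\<^sub>i\<close>
  is the mgf of one step (\<open>mgf_ratio\<close>, \<open>step_mgf\<close> below).

  Convergence: Taylor expansion of \<open>cosh\<close> and \<open>ln\<close> gives
  \<open>|ln H(s) - Q(s)| \<le> |s|\<^sup>6\<close> near \<open>0\<close> for an explicit quartic form \<open>Q\<close> (\<open>quartic_form\<close>);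
  as \<open>n r\<^sub>n\<^sup>4 = 1\<close> this yields \<open>psi_n \<rightarrow> exp \<circ> Q\<close> uniformly on compact sets, and
  \<open>exp \<circ> Q\<close> equals the stated \<open>psi\<close> for \<open>d = 2, 3\<close>.

  Domination: \<open>L\<^sup>1\<close> convergence follows from dominated convergence once the \<open>psi_n\<close> share an
  integrable majorant.  For \<open>|r\<^sub>n t|\<close> large, \<open>M(s) \<le> exp |s|\<close> gives a Gaussian bound in every
  dimension.  For \<open>|r\<^sub>n t|\<close> bounded, a homogeneous quartic bound \<open>H(s) \<le> exp (- P s)\<close> transfers
  to \<open>psi_n t \<le> exp (- P t)\<close>; here the dimensions differ.  For \<open>d = 2\<close> one takes
  \<open>P = k (s\<^sub>1\<^sup>4 + s\<^sub>2\<^sup>4)\<close>; for \<open>d = 3\<close> the pure quartic terms cancel and one takes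
  \<open>P = k (|s|\<^sup>4 - \<Sum> s\<^sub>i\<^sup>4)\<close>, whose exponential is integrable in every dimension \<open>\<ge> 3\<close>
  by a dyadic decomposition into slabs.
\<close>

section \<open>The moment generating function of the walk\<close>

definition step_mgf :: "real ^ 'n::finite \<Rightarrow> real" where
  "step_mgf u = (\<Sum>i\<in>UNIV. cosh (u $ i)) / real CARD('n)"

lemma srw_step_support:
  "({axis i 1 | i. True} \<union> {axis i (-1) | i. True} :: (real ^ 'n::finite) set)
     = range (\<lambda>i. axis i 1) \<union> range (\<lambda>i. axis i (-1))"
  by auto

lemma finite_set_srw_step: "finite (set_pmf (srw_step :: (real ^ 'n::finite) pmf))"
  unfolding srw_step_def srw_step_support by (subst set_pmf_of_set) auto

lemma finite_set_srw: "finite (set_pmf (srw n :: (real ^ 'n::finite) pmf))"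
  by (induction n) (simp_all add: finite_set_srw_step)

lemma step_mgf_eq:
  fixes u :: "real ^ 'n::finite"
  shows "measure_pmf.expectation srw_step (\<lambda>s. exp (u \<bullet> s)) = step_mgf u"
proof -
  let ?A = "range (\<lambda>i. axis i 1) :: (real ^ 'n) set"
  let ?B = "range (\<lambda>i. axis i (-1)) :: (real ^ 'n) set"
  have disj: "?A \<inter> ?B = {}" by (auto simp: axis_eq_axis)
  have injA: "inj (\<lambda>i. axis i (1::real) :: real ^ 'n)" by (auto intro: injI simp: axis_eq_axis)
  have injB: "inj (\<lambda>i. axis i (-1::real) :: real ^ 'n)" by (auto intro: injI simp: axis_eq_axis)
  have card: "card (?A \<union> ?B) = 2 * CARD('n)"
    using disj injA injB by (simp add: card_Un_disjoint card_image)
  have "measure_pmf.expectation srw_step (\<lambda>s. exp (u \<bullet> s))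
      = (\<Sum>s\<in>?A \<union> ?B. exp (u \<bullet> s)) / card (?A \<union> ?B)"
    unfolding srw_step_def srw_step_support by (subst integral_pmf_of_set) auto
  also have "(\<Sum>s\<in>?A \<union> ?B. exp (u \<bullet> s)) = (\<Sum>i\<in>UNIV. exp (u $ i)) + (\<Sum>i\<in>UNIV. exp (- u $ i))"
    using disj injA injB by (simp add: sum.union_disjoint sum.reindex inner_axis)
  also have "\<dots> = 2 * (\<Sum>i\<in>UNIV. cosh (u $ i))"
    by (simp add: sum.distrib[symmetric] sum_distrib_left cosh_field_def, intro sum.cong, auto)
  finally show ?thesis using card by (simp add: step_mgf_def)
qed

text \<open>Since \<open>W\<^sub>n\<close> is a sum of \<open>n\<close> independent steps, its mgf is the \<open>n\<close>-th power.\<close>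
lemma srw_mgf:
  fixes u :: "real ^ 'n::finite"
  shows "measure_pmf.expectation (srw n) (\<lambda>w. exp (u \<bullet> w)) = step_mgf u ^ n"
proof (induction n)
  case 0 then show ?case by simp
next
  case (Suc n)
  let ?E = "\<lambda>p. measure_pmf.expectation p (\<lambda>w. exp (u \<bullet> w))"
  have "?E (srw (Suc n)) =
      (\<Sum>a\<in>set_pmf (srw n). pmf (srw n) a *\<^sub>R ?E (map_pmf (\<lambda>s. a + s) srw_step))"
    using finite_set_srw finite_set_srw_step
    by (simp only: srw.simps, subst pmf_expectation_bind[of "set_pmf (srw n)"]) auto
  also have "\<dots> = (\<Sum>a\<in>set_pmf (srw n). pmf (srw n) a *\<^sub>R exp (u \<bullet> a)) * step_mgf u"
    by (simp add: inner_add_right exp_add step_mgf_eq[symmetric] sum_distrib_right mult.assoc)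
  also have "(\<Sum>a\<in>set_pmf (srw n). pmf (srw n) a *\<^sub>R exp (u \<bullet> a)) = ?E (srw n)"
    using finite_set_srw by (subst integral_measure_pmf[of "set_pmf (srw n)"]) auto
  finally show ?case using Suc by simp
qed

text \<open>The step mgf divided by the mgf \<open>exp (|s|\<^sup>2/(2d))\<close> of the Gaussian with the same
  covariance; \<open>psi_n\<close> is the \<open>n\<close>-th power of this ratio at \<open>n\<^sup>-\<^sup>1\<^sup>/\<^sup>4 t\<close>.\<close>
definition mgf_ratio :: "real ^ 'n::finite \<Rightarrow> real" where
  "mgf_ratio s = step_mgf s * exp (- ((norm s) ^ 2) / (2 * real CARD('n)))"

definition scaling :: "nat \<Rightarrow> real" where "scaling n = real n powr (-1/4)"

lemma scaling_pos: "n > 0 \<Longrightarrow> scaling n > 0"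
  unfolding scaling_def by simp

lemma scaling_sq: "real n * (scaling n) ^ 2 = sqrt (real n)"
proof (cases "n = 0")
  case False
  then have "real n * (scaling n) ^ 2 = real n powr (1 + (-1/2))"
    unfolding scaling_def by (simp add: powr_power powr_mult_base)
  then show ?thesis by (simp add: powr_half_sqrt)
qed (simp add: scaling_def)

lemma scaling_pow4: "n > 0 \<Longrightarrow> real n * (scaling n) ^ 4 = 1"
  unfolding scaling_def by (simp add: powr_power powr_mult_base)

lemma scaling_sq_tendsto: "((\<lambda>n. (scaling n) ^ 2) \<longlongrightarrow> 0) sequentially"
proof -
  have "((\<lambda>n. real n powr (-1/4)) \<longlongrightarrow> 0) sequentially"
    by (rule tendsto_neg_powr) (auto intro: filterlim_real_sequentially)
  from tendsto_power[OF this, of 2] show ?thesis unfolding scaling_def by simp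
qed

lemma exp_pow_scaled_sq:
  "exp (- ((norm (scaling n *\<^sub>R t)) ^ 2) / c) ^ n = exp (- sqrt (real n) * (norm t) ^ 2 / c)"
proof -
  have "exp (- ((norm (scaling n *\<^sub>R t)) ^ 2) / c) ^ n
      = exp (- (real n * (scaling n) ^ 2) * (norm t) ^ 2 / c)"
    by (simp add: exp_of_nat_mult[symmetric] power_mult_distrib)
  then show ?thesis by (simp add: scaling_sq)
qed

lemma psi_n_mgf_ratio: "psi_n n t = mgf_ratio (scaling n *\<^sub>R t) ^ n"
proof -
  have "measure_pmf.expectation (srw n) (\<lambda>w. exp (t \<bullet> (real n powr (-1/4) *\<^sub>R w)))
      = step_mgf (scaling n *\<^sub>R t) ^ n"
    unfolding scaling_def srw_mgf[symmetric] by simp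
  then show ?thesis
    unfolding psi_n_def mgf_ratio_def power_mult_distrib exp_pow_scaled_sq by simp
qed

lemma step_mgf_pos: "step_mgf s > 0"
  unfolding step_mgf_def by (intro divide_pos_pos sum_pos) auto

lemma mgf_ratio_pos: "mgf_ratio s > 0"
  unfolding mgf_ratio_def by (intro mult_pos_pos step_mgf_pos exp_gt_zero)

lemma psi_n_pos: "psi_n n t > 0"
  unfolding psi_n_mgf_ratio by (intro zero_less_power mgf_ratio_pos)

section \<open>Estimates for \<open>cosh\<close>\<close>

lemma cosh_sums: "(\<lambda>k. x ^ (2*k) / fact (2*k)) sums cosh (x::real)"
proof -
  have "(\<lambda>k. (\<lambda>n. if even n then x ^ n /\<^sub>R fact n else 0) (2*k)) sums cosh x
     \<longleftrightarrow> (\<lambda>n. if even n then x ^ n /\<^sub>R fact n else 0) sums cosh x"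
    by (rule sums_mono_reindex) (auto simp: strict_mono_def elim!: evenE)
  then show ?thesis using cosh_converges[of x] by (simp add: divide_inverse mult.commute)
qed

text \<open>Needed to compare the \<open>cosh\<close> tail with \<open>x\<^sup>6 exp (x\<^sup>2) / 720\<close>.\<close>
lemma fact_shift6: "720 * fact k \<le> (fact (k + 6) :: nat)"
proof (induction k)
  case (Suc k)
  have "720 * fact (Suc k) = Suc k * (720 * fact k)" by simp
  also have "\<dots> \<le> (k + 7) * fact (k + 6)" using Suc.IH by (intro mult_le_mono) simp_all
  also have "\<dots> = fact (Suc k + 6)" by (subst add_Suc, subst fact_Suc, simp)
  finally show ?case .
qed (simp add: fact_numeral)

text \<open>Comparison of \<open>(2k)!\<close> with \<open>c\<^sup>k k!\<close>; it lets \<open>cosh x\<close> be dominated termwise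
  by a multiple of \<open>exp (x\<^sup>2/c)\<close>.\<close>
lemma fact_double_lower:
  fixes c C :: nat
  assumes "c \<le> 6" "c \<le> 2 * C" "1 \<le> C"
  shows "c ^ k * fact k \<le> C * fact (2 * k)"
proof (induction k)
  case 0 then show ?case using assms by simp
next
  case (Suc k)
  show ?case
  proof (cases "k = 0")
    case True then show ?thesis using assms by (simp add: fact_numeral)
  next
    case False
    have "c ^ Suc k * fact (Suc k) = (c * Suc k) * (c ^ k * fact k)" by (simp add: algebra_simps)
    also have "\<dots> \<le> ((2*k+1) * (2*k+2)) * (C * fact (2*k))"
    proof (rule mult_le_mono[OF _ Suc.IH])
      have "c * Suc k \<le> 6 * Suc k" using assms(1) by (rule mult_le_mono1)
      also have "\<dots> \<le> (2*k+1) * (2*k+2)" using False by (simp add: algebra_simps)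
      finally show "c * Suc k \<le> (2*k+1) * (2*k+2)" .
    qed
    also have "\<dots> = C * fact (2 * Suc k)" by (simp add: algebra_simps)
    finally show ?thesis .
  qed
qed

lemma fact_double_lower_real:
  assumes "c \<le> 6" "c \<le> 2 * C" "1 \<le> C"
  shows "real c ^ k * fact k \<le> real C * fact (2 * k)"
  using of_nat_mono[OF fact_double_lower[OF assms, of k]] by simp

lemma cosh_taylor4:
  fixes x :: real assumes "\<bar>x\<bar> \<le> 1"
  shows "0 \<le> cosh x - 1 - x^2/2 - x^4/24" and "cosh x - 1 - x^2/2 - x^4/24 \<le> x^6/240"
proof -
  let ?a = "\<lambda>k. x^(2*k) / fact (2*k)"
  have tail: "(\<lambda>k. ?a (k+3)) sums (cosh x - (1 + x^2/2 + x^4/24))"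
    using cosh_sums[of x] by (subst sums_iff_shift) (simp add: eval_nat_numeral fact_numeral)
  have nonneg: "0 \<le> ?a (k+3)" for k
    by (simp add: zero_le_even_power)
  show "0 \<le> cosh x - 1 - x^2/2 - x^4/24"
    using sums_le[OF _ sums_zero tail] nonneg by (simp add: algebra_simps)
  have exp_series: "(\<lambda>k. x^6/720 * ((x^2)^k /\<^sub>R fact k)) sums (x^6/720 * exp (x^2))"
    by (rule sums_mult) (rule exp_converges)
  have term_le: "?a (k+3) \<le> x^6/720 * ((x^2)^k /\<^sub>R fact k)" for k
  proof -
    have "720 * fact k \<le> (fact (k+6) :: real)"
      using of_nat_mono[OF fact_shift6[of k]] by simp
    also have "\<dots> \<le> fact (2*k+6)" by (rule fact_mono) simp
    finally have f: "720 * fact k \<le> (fact (2*k+6) :: real)" .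
    have "?a (k+3) = x^6 * (x^2)^k / fact (2*k+6)"
      by (simp add: power_add flip: power_mult)
    also have "\<dots> \<le> x^6 * (x^2)^k / (720 * fact k)"
      by (intro divide_left_mono f) (auto simp: zero_le_mult_iff)
    also have "\<dots> = x^6/720 * ((x^2)^k /\<^sub>R fact k)" by (simp add: field_simps)
    finally show ?thesis .
  qed
  have "exp (x^2) \<le> exp 1" using assms by (simp add: abs_square_le_1)
  also have "exp (1::real) \<le> 3" using exp_le by simp
  finally have "x^6/720 * exp (x^2) \<le> x^6/720 * 3" by (intro mult_left_mono) simp_all
  with sums_le[OF term_le tail exp_series]
  show "cosh x - 1 - x^2/2 - x^4/24 \<le> x^6/240" by simp
qed

lemma exp_series_term_scaled: "(y / c) ^ k /\<^sub>R fact k = (y::real) ^ k / (c ^ k * fact k)"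
  by (simp add: divide_inverse power_mult_distrib power_inverse mult.commute mult.left_commute)

lemma cosh_le_exp_sixth: "cosh (x::real) \<le> 3 * exp (x^2/6) - 2"
proof -
  let ?b = "\<lambda>k. 3 * ((x^2/6)^k /\<^sub>R fact k) - (if k = 0 then 2 else 0)"
  have sb: "?b sums (3 * exp (x^2/6) - 2)"
    by (intro sums_diff sums_mult exp_converges) (use sums_single[of 0 "\<lambda>_. 2::real"] in simp)
  have "x^(2*k) / fact (2*k) \<le> ?b k" for k
  proof (cases "k = 0")
    case False
    have f: "6^k * fact k \<le> 3 * (fact (2*k) :: real)"
      using fact_double_lower_real[of 6 3 k] by simp
    have "x^(2*k) / fact (2*k) \<le> (x^2)^k / (6^k * fact k / 3)"
      unfolding power_mult by (rule divide_left_mono) (use f in \<open>simp_all\<close>)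
    also have "\<dots> = 3 * ((x^2/6)^k /\<^sub>R fact k)" unfolding exp_series_term_scaled by simp
    also have "\<dots> = ?b k" using False by simp
    finally show ?thesis .
  qed simp
  from sums_le[OF this cosh_sums sb] show ?thesis .
qed

text \<open>Sharper bound used for \<open>d = 2\<close>: it keeps the quartic term \<open>x\<^sup>4/48\<close>.\<close>
lemma cosh_le_exp_quarter: "cosh (x::real) \<le> 2 * exp (x^2/4) - 1 - x^4/48"
proof -
  let ?b = "\<lambda>k. 2 * ((x^2/4)^k /\<^sub>R fact k) - (if k = 0 then 1 else 0)
                 - (if k = 2 then x^4/48 else 0)"
  have sb: "?b sums (2 * exp (x^2/4) - 1 - x^4/48)"
    by (intro sums_diff sums_mult exp_converges)
       (use sums_single[of 0 "\<lambda>_. 1::real"] sums_single[of 2 "\<lambda>_. x^4/48::real"] in simp_all)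
  have "x^(2*k) / fact (2*k) \<le> ?b k" for k
  proof -
    consider "k = 0" | "k = 2" | "k \<noteq> 0" "k \<noteq> 2" by blast
    then show ?thesis
    proof cases
      case 2
      have "(x^2/4)^2 = x^4/16" by (simp add: power_divide flip: power_mult)
      then show ?thesis using 2 by (simp add: fact_numeral)
    next
      case 3
      have f: "4^k * fact k \<le> 2 * (fact (2*k) :: real)"
        using fact_double_lower_real[of 4 2 k] by simp
      have "x^(2*k) / fact (2*k) \<le> (x^2)^k / (4^k * fact k / 2)"
        unfolding power_mult by (rule divide_left_mono) (use f in \<open>simp_all\<close>)
      also have "\<dots> = 2 * ((x^2/4)^k /\<^sub>R fact k)" unfolding exp_series_term_scaled by simp
      also have "\<dots> = ?b k" using 3 by simp
      finally show ?thesis .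
    qed simp
  qed
  from sums_le[OF this cosh_sums sb] show ?thesis .
qed

section \<open>The quartic expansion of \<open>ln (mgf_ratio)\<close> near the origin\<close>

lemma norm_sq_sum: "(norm (s::real ^ 'n::finite)) ^ 2 = (\<Sum>i\<in>UNIV. (s $ i) ^ 2)"
  by (simp only: power2_norm_eq_inner inner_vec_def) (simp add: power2_eq_square)

lemma component_sq_le_norm_sq: "(s $ i) ^ 2 \<le> (norm (s::real ^ 'n::finite)) ^ 2"
  unfolding norm_sq_sum by (rule member_le_sum) auto

lemma sum_powers_le:
  fixes a :: "'i \<Rightarrow> real" assumes fin: "finite I" and nn: "\<And>i. i \<in> I \<Longrightarrow> 0 \<le> a i"
  shows "(\<Sum>i\<in>I. a i ^ 2) \<le> (\<Sum>i\<in>I. a i) ^ 2" and "(\<Sum>i\<in>I. a i ^ 3) \<le> (\<Sum>i\<in>I. a i) ^ 3"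
proof -
  let ?N = "\<Sum>i\<in>I. a i"
  have le: "a i \<le> ?N" if "i \<in> I" for i using fin nn that by (intro member_le_sum) auto
  have "(\<Sum>i\<in>I. a i ^ 2) \<le> (\<Sum>i\<in>I. a i * ?N)"
    by (rule sum_mono) (simp add: power2_eq_square le mult_left_mono nn)
  also have "\<dots> = ?N ^ 2" by (simp add: sum_distrib_right power2_eq_square)
  finally show "(\<Sum>i\<in>I. a i ^ 2) \<le> ?N ^ 2" .
  have "(\<Sum>i\<in>I. a i ^ 3) \<le> (\<Sum>i\<in>I. a i * ?N ^ 2)"
  proof (rule sum_mono)
    fix i assume i: "i \<in> I"
    have "a i ^ 2 \<le> ?N ^ 2" using le[OF i] nn[OF i] by (simp add: power_mono)
    then have "a i * a i ^ 2 \<le> a i * ?N ^ 2" using nn[OF i] by (rule mult_left_mono)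
    then show "a i ^ 3 \<le> a i * ?N ^ 2" by (simp add: power3_eq_cube power2_eq_square)
  qed
  also have "\<dots> = ?N ^ 3" by (simp add: sum_distrib_right[symmetric] power3_eq_cube power2_eq_square)
  finally show "(\<Sum>i\<in>I. a i ^ 3) \<le> ?N ^ 3" .
qed

lemma sum_fourth_le_norm: "(\<Sum>i\<in>UNIV. (s $ i) ^ 4) \<le> (norm (s::real ^ 'n::finite)) ^ 4"
  using sum_powers_le(1)[of UNIV "\<lambda>i. (s $ i) ^ 2"]
  by (simp add: norm_sq_sum[symmetric] flip: power_mult)

lemma sum_sixth_le_norm: "(\<Sum>i\<in>UNIV. (s $ i) ^ 6) \<le> (norm (s::real ^ 'n::finite)) ^ 6"
  using sum_powers_le(2)[of UNIV "\<lambda>i. (s $ i) ^ 2"]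
  by (simp add: norm_sq_sum[symmetric] flip: power_mult)

lemma ln_one_plus_lower: assumes "0 \<le> (a::real)" shows "a - a ^ 2 / 2 \<le> ln (1 + a)"
proof -
  let ?f = "\<lambda>x::real. ln (1 + x) - x + x ^ 2 / 2"
  have "?f 0 \<le> ?f a"
  proof (rule DERIV_nonneg_imp_nondecreasing[OF assms])
    fix x :: real assume x: "0 \<le> x" "x \<le> a"
    have "DERIV ?f x :> (1 / (1 + x) - 1 + x)"
      using x by (auto intro!: derivative_eq_intros)
    moreover have "1 / (1 + x) - 1 + x = x ^ 2 / (1 + x)"
      using x by (simp add: field_simps power2_eq_square)
    ultimately show "\<exists>y. DERIV ?f x :> y \<and> 0 \<le> y" using x by auto
  qed
  then show ?thesis by simp
qed

lemma ln_one_plus_upper: assumes "0 \<le> (a::real)" shows "ln (1 + a) \<le> a - a ^ 2 / 2 + a ^ 3 / 3"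
proof -
  let ?f = "\<lambda>x::real. x - x ^ 2 / 2 + x ^ 3 / 3 - ln (1 + x)"
  have "?f 0 \<le> ?f a"
  proof (rule DERIV_nonneg_imp_nondecreasing[OF assms])
    fix x :: real assume x: "0 \<le> x" "x \<le> a"
    have "DERIV ?f x :> (1 - x + x ^ 2 - 1 / (1 + x))"
      using x by (auto intro!: derivative_eq_intros simp: power2_eq_square)
    moreover have "1 - x + x ^ 2 - 1 / (1 + x) = x ^ 3 / (1 + x)"
      using x by (simp add: field_simps power2_eq_square power3_eq_cube)
    ultimately show "\<exists>y. DERIV ?f x :> y \<and> 0 \<le> y" using x by auto
  qed
  then show ?thesis by simp
qed

lemma step_mgf_taylor:
  fixes s :: "real ^ 'n::finite"
  assumes small: "(norm s) ^ 2 \<le> 1"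
  defines "R \<equiv> step_mgf s - 1 - (norm s) ^ 2 / (2 * real CARD('n))
                  - (\<Sum>i\<in>UNIV. (s $ i) ^ 4) / (24 * real CARD('n))"
  shows "0 \<le> R" and "R \<le> (norm s) ^ 6 / 240"
proof -
  let ?d = "real CARD('n)"
  let ?r = "\<lambda>i. cosh (s $ i) - 1 - (s $ i) ^ 2/2 - (s $ i) ^ 4/24"
  have comp: "\<bar>s $ i\<bar> \<le> 1" for i
  proof -
    have "(s $ i) ^ 2 \<le> 1" using component_sq_le_norm_sq[of s i] small by linarith
    then show ?thesis by (simp add: abs_square_le_1)
  qed
  have R_eq: "R = (\<Sum>i\<in>UNIV. ?r i) / ?d"
    unfolding R_def step_mgf_def norm_sq_sum
    by (simp add: sum_subtractf sum_divide_distrib diff_divide_distrib)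
  have sum_r0: "0 \<le> (\<Sum>i\<in>UNIV. ?r i)"
    by (rule sum_nonneg) (rule cosh_taylor4(1)[OF comp])
  then show "0 \<le> R" unfolding R_eq by simp
  have "R \<le> (\<Sum>i\<in>UNIV. ?r i)"
    unfolding R_eq using sum_r0 by (simp add: divide_le_eq mult_le_cancel_left1)
  also have "\<dots> \<le> (\<Sum>i\<in>UNIV. (s $ i) ^ 6) / 240"
    unfolding sum_divide_distrib by (rule sum_mono) (rule cosh_taylor4(2)[OF comp])
  also have "\<dots> \<le> (norm s) ^ 6 / 240" using sum_sixth_le_norm[of s] by simp
  finally show "R \<le> (norm s) ^ 6 / 240" .
qed

text \<open>The limiting exponent: \<open>ln (mgf_ratio s) = quartic_form s + O(|s|\<^sup>6)\<close>.\<close>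
definition quartic_form :: "real ^ 'n::finite \<Rightarrow> real" where
  "quartic_form s = (\<Sum>i\<in>UNIV. (s $ i) ^ 4) / (24 * real CARD('n))
                     - (norm s) ^ 4 / (8 * (real CARD('n)) ^ 2)"

lemma ln_mgf_ratio_expansion:
  fixes s :: "real ^ 'n::finite"
  assumes small: "(norm s) ^ 2 \<le> 1"
  shows "\<bar>ln (mgf_ratio s) - quartic_form s\<bar> \<le> (norm s) ^ 6"
proof -
  define d where "d = real CARD('n)"
  define N where "N = (norm s) ^ 2"
  define F where "F = (\<Sum>i\<in>UNIV. (s $ i) ^ 4)"
  define R where "R = step_mgf s - 1 - N / (2*d) - F / (24*d)"
  define A where "A = step_mgf s - 1"
  have d1: "d \<ge> 1" and N0: "0 \<le> N" and N1: "N \<le> 1" and F0: "0 \<le> F"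
    using small by (simp_all add: d_def N_def F_def sum_nonneg)
  have FN: "F \<le> N ^ 2" using sum_fourth_le_norm[of s] by (simp add: F_def N_def flip: power_mult)
  have R0: "0 \<le> R" and RN: "R \<le> N ^ 3 / 240"
    using step_mgf_taylor[OF small] by (simp_all add: R_def N_def F_def d_def flip: power_mult)
  have NN: "N ^ 3 \<le> N ^ 2" "N ^ 2 \<le> N"
    using power_decreasing[of 2 3 N] power_decreasing[of 1 2 N] N0 N1 by simp_all
  have t1: "0 \<le> N / (2*d)" "N / (2*d) \<le> N / 2"
    using d1 N0 by simp (intro frac_le, use d1 N0 in auto)
  have t2: "0 \<le> F / (24*d)" "F / (24*d) \<le> N ^ 2 / 24"
    using d1 F0 by simp (intro frac_le, use d1 F0 FN in auto)
  have A_eq: "A = N / (2*d) + F / (24*d) + R" unfolding A_def R_def by simp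
  have A0: "0 \<le> A" and AN: "A \<le> N" using A_eq t1 t2 R0 RN NN by linarith+
  have ln_ratio: "ln (mgf_ratio s) = ln (1 + A) - N / (2*d)"
    unfolding mgf_ratio_def A_def N_def d_def using step_mgf_pos[of s] by (simp add: ln_mult)
  have Q_eq: "quartic_form s = F / (24*d) - N ^ 2 / (8 * d ^ 2)"
    unfolding quartic_form_def F_def N_def d_def by (simp flip: power_mult)
  text \<open>The error splits into the logarithm's remainder, the cosh remainder \<open>R\<close>, and
    half the difference of squares \<open>P = A\<^sup>2 - (N/(2d))\<^sup>2\<close>, which is of order \<open>N\<^sup>3\<close>.\<close>
  define P where "P = (A - N/(2*d)) * (A + N/(2*d))"
  have split: "ln (mgf_ratio s) - quartic_form s = (ln (1 + A) - A + A ^ 2 / 2) + R - P / 2"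
    unfolding ln_ratio Q_eq A_eq P_def using d1 by (simp add: power2_eq_square field_simps)
  have P0: "0 \<le> P" unfolding P_def using A_eq t1 t2 R0 by simp
  have PN: "P \<le> N ^ 3 / 6"
  proof -
    have "P \<le> (N ^ 2 / 12) * (2 * N)"
      unfolding P_def using A_eq t1 t2 R0 RN NN A0 AN by (intro mult_mono) linarith+
    then show ?thesis by (simp add: power2_eq_square power3_eq_cube)
  qed
  have "A ^ 3 \<le> N ^ 3" using A0 AN by (simp add: power_mono)
  moreover note ln_one_plus_lower[OF A0] ln_one_plus_upper[OF A0]
  moreover have "0 \<le> N ^ 3" using N0 by simp
  ultimately have "\<bar>ln (mgf_ratio s) - quartic_form s\<bar> \<le> N ^ 3"
    unfolding split abs_le_iff using R0 RN P0 PN by (intro conjI; linarith)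
  then show ?thesis by (simp add: N_def flip: power_mult)
qed

section \<open>Locally uniform convergence\<close>

lemma quartic_form_scale: "quartic_form (c *\<^sub>R t) = c ^ 4 * quartic_form (t :: real ^ 'n::finite)"
proof -
  have "(norm (c *\<^sub>R t)) ^ 4 = c ^ 4 * (norm t) ^ 4"
    by (simp add: power_mult_distrib)
  then show ?thesis unfolding quartic_form_def
    by (simp add: sum_distrib_left field_simps)
qed

lemma quartic_form_bound: "\<bar>quartic_form (t :: real ^ 'n::finite)\<bar> \<le> (norm t) ^ 4"
proof -
  define d where "d = real CARD('n)"
  have d1: "1 \<le> d" and d2: "1 \<le> d ^ 2" unfolding d_def by simp_all
  have F0: "0 \<le> (\<Sum>i\<in>UNIV. (t $ i) ^ 4)" by (simp add: sum_nonneg)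
  have "(\<Sum>i\<in>UNIV. (t $ i) ^ 4) / (24 * d) \<le> (\<Sum>i\<in>UNIV. (t $ i) ^ 4)"
    using F0 d1 by (simp add: divide_le_eq mult_le_cancel_left1)
  moreover have "(norm t) ^ 4 / (8 * d ^ 2) \<le> (norm t) ^ 4"
    using d2 by (simp add: divide_le_eq mult_le_cancel_left1)
  moreover have "0 \<le> (\<Sum>i\<in>UNIV. (t $ i) ^ 4) / (24 * d)" using F0 d1 by simp
  moreover have "0 \<le> (norm t) ^ 4 / (8 * d ^ 2)" by simp
  ultimately show ?thesis
    using sum_fourth_le_norm[of t] unfolding quartic_form_def d_def abs_le_iff
    by (intro conjI) linarith+
qed

lemma ln_psi_n_approx:
  fixes t :: "real ^ 'n::finite"
  assumes n: "n > 0" and tR: "norm t \<le> R" and small: "(scaling n) ^ 2 * R ^ 2 \<le> 1"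
  shows "\<bar>ln (psi_n n t) - quartic_form t\<bar> \<le> (scaling n) ^ 2 * R ^ 6"
proof -
  define r where "r = scaling n"
  have r0: "r > 0" and nr4: "real n * r ^ 4 = 1"
    unfolding r_def using n by (simp_all add: scaling_pos scaling_pow4)
  have nrm: "norm (r *\<^sub>R t) = r * norm t" using r0 by simp
  have "(norm (r *\<^sub>R t)) ^ 2 \<le> r ^ 2 * R ^ 2"
    unfolding nrm power_mult_distrib using tR by (intro mult_left_mono power_mono) auto
  then have "(norm (r *\<^sub>R t)) ^ 2 \<le> 1" using small unfolding r_def by linarith
  note expansion = ln_mgf_ratio_expansion[OF this]
  have "ln (psi_n n t) = real n * ln (mgf_ratio (r *\<^sub>R t))"
    unfolding psi_n_mgf_ratio r_def by (simp add: ln_realpow mgf_ratio_pos)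
  moreover have "quartic_form t = real n * quartic_form (r *\<^sub>R t)"
    unfolding quartic_form_scale using nr4 by (simp add: mult.assoc[symmetric])
  ultimately have "\<bar>ln (psi_n n t) - quartic_form t\<bar>
      = real n * \<bar>ln (mgf_ratio (r *\<^sub>R t)) - quartic_form (r *\<^sub>R t)\<bar>"
    by (simp add: abs_mult flip: right_diff_distrib)
  also have "\<dots> \<le> real n * (norm (r *\<^sub>R t)) ^ 6"
    using expansion by (intro mult_left_mono) auto
  also have "\<dots> = (real n * r ^ 4) * r ^ 2 * (norm t) ^ 6"
    unfolding nrm by (simp add: algebra_simps flip: power_add)
  also have "\<dots> \<le> r ^ 2 * R ^ 6" using tR nr4 by (simp add: mult_left_mono power_mono)
  finally show ?thesis unfolding r_def .
qed

lemma exp_diff_bound: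
  fixes a b :: real assumes "\<bar>a - b\<bar> \<le> 1"
  shows "\<bar>exp a - exp b\<bar> \<le> 3 * exp b * \<bar>a - b\<bar>"
proof -
  define x where "x = a - b"
  have lo: "x \<le> exp x - 1" using exp_ge_add_one_self[of x] by linarith
  have hi: "exp x - 1 \<le> x * exp x"
  proof -
    have "(1 - x) * exp x \<le> exp (-x) * exp x"
      using exp_ge_add_one_self[of "-x"] by (intro mult_right_mono) auto
    then show ?thesis by (simp add: exp_minus field_simps)
  qed
  have "exp x \<le> exp 1" using assms unfolding x_def by simp
  also have "exp (1::real) \<le> 3" using exp_le by simp
  finally have ex3: "exp x \<le> 3" .
  have "\<bar>exp x - 1\<bar> \<le> 3 * \<bar>x\<bar>"
  proof (cases "x \<ge> 0")
    case True
    then have "x * exp x \<le> x * 3" using ex3 by (intro mult_left_mono) auto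
    then show ?thesis using lo hi True by simp
  next
    case False
    then have "x \<le> x * exp x" using exp_le_one_iff[of x] by (simp add: mult_le_cancel_left1)
    then show ?thesis using lo hi False by simp
  qed
  moreover have "exp a - exp b = exp b * (exp x - 1)"
    unfolding x_def by (simp add: exp_diff field_simps)
  then have "\<bar>exp a - exp b\<bar> = exp b * \<bar>exp x - 1\<bar>" by (simp add: abs_mult)
  ultimately show ?thesis unfolding x_def by (simp add: mult_left_mono)
qed

theorem psi_n_locally_uniform:
  assumes K: "compact (K :: (real ^ 'n::finite) set)"
  shows "uniform_limit K (\<lambda>n. psi_n n :: real ^ 'n \<Rightarrow> real) (\<lambda>t. exp (quartic_form t)) sequentially"
  unfolding uniform_limit_iff
proof (intro allI impI)
  fix e :: real assume e: "e > 0"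
  obtain R where R0: "R > 0" and KR: "\<And>t. t \<in> K \<Longrightarrow> norm t \<le> R"
    using compact_imp_bounded[OF K] unfolding bounded_pos by auto
  define B where "B = exp (R ^ 4)"
  have B0: "B > 0" unfolding B_def by simp
  define \<delta> where "\<delta> = min (1 / R ^ 2) (min (1 / R ^ 6) (e / (3 * B * R ^ 6)))"
  have \<delta>0: "\<delta> > 0" unfolding \<delta>_def using R0 e B0 by auto
  have "\<forall>\<^sub>F n in sequentially. (scaling n) ^ 2 < \<delta> \<and> n > 0"
    using order_tendstoD(2)[OF scaling_sq_tendsto \<delta>0] eventually_gt_at_top[of 0]
    by eventually_elim auto
  then show "\<forall>\<^sub>F n in sequentially. \<forall>t\<in>K. dist (psi_n n t) (exp (quartic_form t)) < e"
  proof eventually_elim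
    case (elim n)
    then have n0: "n > 0" and c1: "(scaling n) ^ 2 * R ^ 2 \<le> 1"
      and c2: "(scaling n) ^ 2 * R ^ 6 \<le> 1" and c3: "3 * B * ((scaling n) ^ 2 * R ^ 6) < e"
      using R0 B0 unfolding \<delta>_def by (auto simp: field_simps)
    show "\<forall>t\<in>K. dist (psi_n n t) (exp (quartic_form t)) < e"
    proof
      fix t assume t: "t \<in> K"
      have err: "\<bar>ln (psi_n n t) - quartic_form t\<bar> \<le> (scaling n) ^ 2 * R ^ 6"
        by (rule ln_psi_n_approx[OF n0 KR[OF t] c1])
      have "quartic_form t \<le> R ^ 4"
        using quartic_form_bound[of t] power_mono[OF KR[OF t], of 4] by simp
      then have QB: "exp (quartic_form t) \<le> B" unfolding B_def by simp
      have "dist (psi_n n t) (exp (quartic_form t)) = \<bar>exp (ln (psi_n n t)) - exp (quartic_form t)\<bar>"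
        using psi_n_pos[of n t] by (simp add: dist_real_def)
      also have "\<dots> \<le> 3 * exp (quartic_form t) * \<bar>ln (psi_n n t) - quartic_form t\<bar>"
        by (rule exp_diff_bound) (use err c2 in linarith)
      also have "\<dots> \<le> 3 * B * ((scaling n) ^ 2 * R ^ 6)"
        using QB err B0 by (intro mult_mono) auto
      finally show "dist (psi_n n t) (exp (quartic_form t)) < e" using c3 by linarith
    qed
  qed
qed

section \<open>From an integrable majorant to \<open>L\<^sup>1\<close> convergence\<close>

lemma mgf_ratio_continuous: "continuous_on UNIV (mgf_ratio :: real ^ 'n::finite \<Rightarrow> real)"
  unfolding mgf_ratio_def[abs_def] step_mgf_def by (intro continuous_intros) auto

lemma psi_n_measurable: "(psi_n n :: real ^ 'n::finite \<Rightarrow> real) \<in> borel_measurable lborel"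
proof -
  have "continuous_on UNIV (\<lambda>t::real ^ 'n. mgf_ratio (scaling n *\<^sub>R t) ^ n)"
    by (intro continuous_intros continuous_on_compose2[OF mgf_ratio_continuous]) auto
  then show ?thesis unfolding psi_n_mgf_ratio[abs_def] by (simp add: borel_measurable_continuous_onI)
qed

lemma exp_quartic_form_measurable:
  "(\<lambda>t :: real ^ 'n::finite. exp (quartic_form t)) \<in> borel_measurable lborel"
proof -
  have "continuous_on UNIV (\<lambda>t::real ^ 'n. exp (quartic_form t))"
    unfolding quartic_form_def by (intro continuous_intros) auto
  then show ?thesis by (simp add: borel_measurable_continuous_onI)
qed

lemma L1_tendsto_if_dominated:
  fixes f :: "nat \<Rightarrow> 'a \<Rightarrow> real"
  assumes f_meas: "\<And>n. f n \<in> borel_measurable M" and g_meas: "g \<in> borel_measurable M"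
    and lim: "\<And>x. x \<in> space M \<Longrightarrow> (\<lambda>n. f n x) \<longlonglongrightarrow> g x"
    and G_int: "integrable M G"
    and dom: "\<forall>\<^sub>F n in sequentially. \<forall>x\<in>space M. \<bar>f n x\<bar> \<le> G x"
  shows "((\<lambda>n. \<integral>x. \<bar>f n x - g x\<bar> \<partial>M) \<longlongrightarrow> 0) sequentially"
proof -
  obtain N where N: "\<And>n x. n \<ge> N \<Longrightarrow> x \<in> space M \<Longrightarrow> \<bar>f n x\<bar> \<le> G x"
    using dom unfolding eventually_sequentially by blast
  have gG: "\<bar>g x\<bar> \<le> G x" if x: "x \<in> space M" for x
    using N[OF _ x] by (intro LIMSEQ_le_const2[OF tendsto_rabs[OF lim[OF x]]] exI[of _ N]) auto
  have "(\<lambda>i. \<integral>x. \<bar>f (i + N) x - g x\<bar> \<partial>M) \<longlonglongrightarrow> (\<integral>x. 0 \<partial>M)"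
  proof (rule integral_dominated_convergence[where w = "\<lambda>x. 2 * G x"])
    show "(\<lambda>x. \<bar>f (i + N) x - g x\<bar>) \<in> borel_measurable M" for i
      using f_meas g_meas by measurable
    show "integrable M (\<lambda>x. 2 * G x)" using G_int by simp
    show "AE x in M. (\<lambda>i. \<bar>f (i + N) x - g x\<bar>) \<longlonglongrightarrow> 0"
    proof (rule AE_I2)
      fix x assume x: "x \<in> space M"
      have "(\<lambda>i. \<bar>f (i + N) x - g x\<bar>) \<longlonglongrightarrow> \<bar>g x - g x\<bar>"
        by (intro tendsto_rabs tendsto_diff LIMSEQ_ignore_initial_segment[OF lim[OF x]] tendsto_const)
      then show "(\<lambda>i. \<bar>f (i + N) x - g x\<bar>) \<longlonglongrightarrow> 0" by simp
    qed
    show "AE x in M. norm \<bar>f (i + N) x - g x\<bar> \<le> 2 * G x" for i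
      using N[of "i + N"] gG by (intro AE_I2) fastforce
  qed simp
  then show ?thesis by (simp add: LIMSEQ_offset[where k = N])
qed

theorem srw_conv_if_dominated:
  fixes psi G :: "real ^ 'n::finite \<Rightarrow> real"
  assumes psi_eq: "\<And>t. psi t = exp (quartic_form t)"
    and G_int: "integrable lborel G"
    and dom: "\<And>n t. n > 0 \<Longrightarrow> psi_n n t \<le> G t"
  shows "srw_conv psi"
proof -
  have psi: "psi = (\<lambda>t. exp (quartic_form t))" using psi_eq by auto
  have unif: "\<forall>K :: (real ^ 'n) set. compact K \<longrightarrow>
      uniform_limit K (\<lambda>n. psi_n n :: real ^ 'n \<Rightarrow> real) psi sequentially"
    unfolding psi using psi_n_locally_uniform by blast
  have lim: "(\<lambda>n. psi_n n t) \<longlonglongrightarrow> psi t" for t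
    by (rule tendsto_uniform_limitI[OF unif[rule_format, of "{t}"]]) auto
  have psi_meas: "psi \<in> borel_measurable lborel"
    unfolding psi by (rule exp_quartic_form_measurable)
  have dom_ev: "\<forall>\<^sub>F n in sequentially. \<forall>t. \<bar>psi_n n t\<bar> \<le> G t"
    using eventually_gt_at_top[of 0] by eventually_elim (simp add: abs_of_pos psi_n_pos dom)
  have psi_int: "integrable lborel psi"
  proof (rule Bochner_Integration.integrable_bound[OF G_int psi_meas], rule AE_I2)
    fix t
    have "\<bar>psi t\<bar> \<le> G t"
      using dom by (intro LIMSEQ_le_const2[OF tendsto_rabs[OF lim]] exI[of _ 1]) (simp add: abs_of_pos psi_n_pos)
    then show "norm (psi t) \<le> norm (G t)" by simp
  qed
  have psi_n_int: "\<forall>\<^sub>F n in sequentially. integrable lborel (psi_n n :: real ^ 'n \<Rightarrow> real)"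
    using dom_ev
  proof eventually_elim
    case (elim n)
    show ?case
      by (rule Bochner_Integration.integrable_bound[OF G_int psi_n_measurable])
         (use elim in \<open>auto intro!: AE_I2 intro: order_trans[OF _ abs_ge_self]\<close>)
  qed
  have "((\<lambda>n. LINT (t :: real ^ 'n)|lborel. \<bar>psi_n n t - psi t\<bar>) \<longlongrightarrow> 0) sequentially"
    using dom_ev by (intro L1_tendsto_if_dominated[OF psi_n_measurable psi_meas lim G_int]) auto
  then show ?thesis unfolding srw_conv_def using unif psi_int psi_n_int by blast
qed

section \<open>Gaussian majorants\<close>

lemma gauss_integral_1d:
  fixes a :: real assumes a: "a > 0"
  shows "(\<integral>\<^sup>+x. ennreal (exp (- a * x ^ 2)) \<partial>lborel) = ennreal (sqrt (pi / a))"
proof -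
  define \<sigma> where "\<sigma> = 1 / sqrt (2 * a)"
  have \<sigma>0: "\<sigma> > 0" unfolding \<sigma>_def using a by simp
  have s2: "\<sigma> ^ 2 = 1 / (2 * a)" unfolding \<sigma>_def using a by (simp add: power_divide)
  have eq: "exp (- a * x ^ 2) = sqrt (pi / a) * normal_density 0 \<sigma> x" for x
  proof -
    have "sqrt (2 * pi * \<sigma>\<^sup>2) = sqrt (pi / a)" using s2 a by simp
    moreover have "- (x - 0)\<^sup>2 / (2 * \<sigma>\<^sup>2) = - a * x ^ 2" using a by (simp add: s2 field_simps)
    moreover have "sqrt (pi / a) > 0" using a by simp
    ultimately show ?thesis using a unfolding normal_density_def by simp
  qed
  have int: "integrable lborel (\<lambda>x::real. exp (- a * x ^ 2))"
    unfolding eq using \<sigma>0 by (intro integrable_mult_right integrable_normal_density)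
  have "(\<integral>x. exp (- a * x ^ 2) \<partial>lborel) = sqrt (pi / a)"
    unfolding eq using integral_normal_density[OF \<sigma>0] by simp
  then show ?thesis using nn_integral_eq_integral[OF int] by simp
qed

lemma gauss_integrable:
  fixes c :: real assumes c: "c > 0"
  shows "integrable lborel (\<lambda>t::real ^ 'n::finite. exp (- c * (norm t) ^ 2))"
proof (rule integrableI_nonneg)
  have eq: "exp (- c * (norm t) ^ 2) = (\<Prod>b\<in>Basis. exp (- c * (t \<bullet> b) ^ 2))" for t :: "real ^ 'n"
  proof -
    have "(norm t) ^ 2 = (\<Sum>b\<in>Basis. (t \<bullet> b) ^ 2)"
      by (simp only: power2_norm_eq_inner euclidean_inner[of t t]) (simp add: power2_eq_square)
    then show ?thesis by (simp add: sum_distrib_left exp_sum)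
  qed
  have "(\<integral>\<^sup>+t. ennreal (exp (- c * (norm (t::real ^ 'n)) ^ 2)) \<partial>lborel)
      = (\<Prod>b\<in>(Basis::(real ^ 'n) set). (\<integral>\<^sup>+x. ennreal (exp (- c * x ^ 2)) \<partial>lborel))"
    unfolding eq prod_ennreal[OF exp_ge_zero, symmetric] by (rule nn_integral_lborel_prod) auto
  also have "\<dots> = (\<Prod>b\<in>(Basis::(real ^ 'n) set). ennreal (sqrt (pi / c)))"
    using gauss_integral_1d[OF c] by simp
  also have "\<dots> < \<infinity>" using c by (subst prod_ennreal) auto
  finally show "(\<integral>\<^sup>+t. ennreal (exp (- c * (norm (t::real ^ 'n)) ^ 2)) \<partial>lborel) < \<infinity>" .
qed auto

text \<open>Far from the origin the step mgf is at most \<open>exp |s|\<close>, which is beaten by the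
  Gaussian factor; this yields a Gaussian majorant of \<open>psi_n\<close> there, in every dimension.\<close>
lemma mgf_ratio_large:
  fixes s :: "real ^ 'n::finite"
  assumes big: "(norm s) ^ 2 \<ge> 16 * (real CARD('n)) ^ 2"
  shows "mgf_ratio s \<le> exp (- ((norm s) ^ 2) / (4 * real CARD('n)))"
proof -
  define d where "d = real CARD('n)"
  have d1: "d \<ge> 1" unfolding d_def by simp
  have "cosh (s $ i) \<le> exp (norm s)" for i
  proof -
    have "cosh (s $ i) \<le> exp \<bar>s $ i\<bar>"
      unfolding cosh_field_def by (cases "s $ i \<ge> 0") (auto simp: field_simps)
    also have "\<dots> \<le> exp (norm s)" using component_le_norm_cart[of s i] by simp
    finally show ?thesis .
  qed
  then have "(\<Sum>i\<in>UNIV. cosh (s $ i)) \<le> d * exp (norm s)"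
    unfolding d_def using sum_mono[of UNIV "\<lambda>i. cosh (s $ i)" "\<lambda>_. exp (norm s)"] by simp
  then have M: "step_mgf s \<le> exp (norm s)"
    unfolding step_mgf_def d_def[symmetric] using d1 by (simp add: divide_le_eq mult.commute)
  have "(4 * d) ^ 2 \<le> (norm s) ^ 2" using big unfolding d_def by (simp add: power_mult_distrib)
  then have "4 * d \<le> norm s" by (rule power2_le_imp_le) simp
  then have "norm s * (4 * d) \<le> norm s * norm s" by (intro mult_left_mono) auto
  then have key: "norm s \<le> (norm s) ^ 2 / (4 * d)"
    using d1 by (simp add: le_divide_eq power2_eq_square)
  have "mgf_ratio s \<le> exp (norm s) * exp (- ((norm s) ^ 2) / (2 * d))"
    unfolding mgf_ratio_def d_def using M by (intro mult_right_mono) auto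
  also have "\<dots> = exp (norm s - 2 * ((norm s) ^ 2 / (4 * d)))"
    using d1 by (simp add: mult_exp_exp field_simps)
  also have "\<dots> \<le> exp (- ((norm s) ^ 2) / (4 * d))" using key by simp
  finally show ?thesis unfolding d_def .
qed

lemma psi_n_large:
  fixes t :: "real ^ 'n::finite"
  assumes n: "n > 0" and big: "(norm (scaling n *\<^sub>R t)) ^ 2 \<ge> 16 * (real CARD('n)) ^ 2"
  shows "psi_n n t \<le> exp (- ((norm t) ^ 2) / (4 * real CARD('n)))"
proof -
  let ?c = "4 * real CARD('n)"
  have "psi_n n t \<le> exp (- ((norm (scaling n *\<^sub>R t)) ^ 2) / ?c) ^ n"
    unfolding psi_n_mgf_ratio
    using mgf_ratio_large[OF big] mgf_ratio_pos by (intro power_mono) (auto intro: less_imp_le)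
  also have "\<dots> = exp (- sqrt (real n) * (norm t) ^ 2 / ?c)" by (rule exp_pow_scaled_sq)
  also have "\<dots> \<le> exp (- ((norm t) ^ 2) / ?c)"
    using n by (simp add: divide_right_mono mult_le_cancel_right1)
  finally show ?thesis .
qed

lemma psi_n_majorant:
  fixes P :: "real ^ 'n::finite \<Rightarrow> real"
  assumes hom: "\<And>c t. P (c *\<^sub>R t) = c ^ 4 * P t"
    and near: "\<And>s. (norm s) ^ 2 \<le> 16 * (real CARD('n)) ^ 2 \<Longrightarrow> mgf_ratio s \<le> exp (- P s)"
    and n: "n > 0"
  shows "psi_n n t \<le> exp (- P t) + exp (- ((norm t) ^ 2) / (4 * real CARD('n)))"
proof (cases "(norm (scaling n *\<^sub>R t)) ^ 2 \<le> 16 * (real CARD('n)) ^ 2")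
  case True
  have "psi_n n t \<le> exp (- P (scaling n *\<^sub>R t)) ^ n"
    unfolding psi_n_mgf_ratio using near[OF True] mgf_ratio_pos by (intro power_mono) (auto intro: less_imp_le)
  also have "\<dots> = exp (- (real n * (scaling n) ^ 4) * P t)"
    unfolding hom by (simp add: exp_of_nat_mult[symmetric] algebra_simps)
  also have "\<dots> = exp (- P t)" using scaling_pow4[OF n] by simp
  finally show ?thesis by (simp add: add_increasing2)
next
  case False
  then have "psi_n n t \<le> exp (- ((norm t) ^ 2) / (4 * real CARD('n)))"
    by (intro psi_n_large[OF n]) simp
  then show ?thesis by (simp add: add_increasing)
qed

corollary srw_conv_if_near_bound:
  fixes psi P :: "real ^ 'n::finite \<Rightarrow> real"
  assumes "\<And>t. psi t = exp (quartic_form t)"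
    and "\<And>c t. P (c *\<^sub>R t) = c ^ 4 * P t"
    and "\<And>s. (norm s) ^ 2 \<le> 16 * (real CARD('n)) ^ 2 \<Longrightarrow> mgf_ratio s \<le> exp (- P s)"
    and P_int: "integrable lborel (\<lambda>t. exp (- P t))"
  shows "srw_conv psi"
proof (rule srw_conv_if_dominated)
  have "1 / (4 * real CARD('n)) > 0" by simp
  from Bochner_Integration.integrable_add[OF P_int gauss_integrable[OF this]]
  show "integrable lborel (\<lambda>t. exp (- P t) + exp (- ((norm t) ^ 2) / (4 * real CARD('n))))"
    by simp
qed (use assms psi_n_majorant in blast)+

section \<open>Dimension two\<close>

lemma norm_sq_2: "(norm (t::real ^ 2)) ^ 2 = (t$1) ^ 2 + (t$2) ^ 2"
  unfolding norm_sq_sum by (simp add: sum_2)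

lemma psi2_eq: "psi2 t = exp (quartic_form t)"
proof -
  have "(norm t) ^ 4 = ((t$1) ^ 2 + (t$2) ^ 2) ^ 2" by (simp add: norm_sq_2 flip: norm_sq_2 power_mult)
  then have "quartic_form t = ((t$1) ^ 4 + (t$2) ^ 4) / 48 - ((t$1) ^ 2 + (t$2) ^ 2) ^ 2 / 32"
    unfolding quartic_form_def by (simp add: sum_2)
  also have "\<dots> = - ((t$1) ^ 4 + (t$2) ^ 4 + 6 * (t$1)\<^sup>2 * (t$2)\<^sup>2) / 96"
    by (simp add: field_simps power2_eq_square power4_eq_xxxx)
  finally show ?thesis unfolding psi2_def by simp
qed

definition k2 :: real where "k2 = exp (-16) / 96"

lemma k2_pos: "k2 > 0" unfolding k2_def by simp

text \<open>In the plane, the quartic term of \<open>cosh\<close> survives the Gaussian normalisation and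
  gives decay \<open>exp (- k2 (s\<^sub>1\<^sup>4 + s\<^sub>2\<^sup>4))\<close> on a fixed ball.\<close>
lemma mgf_ratio_near_2:
  fixes s :: "real ^ 2"
  assumes small: "(norm s) ^ 2 \<le> 64"
  shows "mgf_ratio s \<le> exp (- k2 * ((s$1) ^ 4 + (s$2) ^ 4))"
proof -
  define x1 where "x1 = exp ((s$1) ^ 2 / 4) - 1"
  define x2 where "x2 = exp ((s$2) ^ 2 / 4) - 1"
  define F where "F = (s$1) ^ 4 + (s$2) ^ 4"
  define E where "E = exp ((norm s) ^ 2 / 4)"
  have x0: "x1 * x2 \<ge> 0" unfolding x1_def x2_def by simp
  have E_eq: "E = (1 + x1) * (1 + x2)"
    unfolding E_def x1_def x2_def norm_sq_2 by (simp add: add_divide_distrib exp_add)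
  have E0: "E > 0" and E16: "E \<le> exp 16" unfolding E_def using small by simp_all
  have "step_mgf s = (cosh (s$1) + cosh (s$2)) / 2" unfolding step_mgf_def by (simp add: sum_2)
  also have "\<dots> \<le> E - F / 96"
  proof -
    have "cosh (s$1) \<le> 1 + 2 * x1 - (s$1) ^ 4 / 48" "cosh (s$2) \<le> 1 + 2 * x2 - (s$2) ^ 4 / 48"
      using cosh_le_exp_quarter[of "s$1"] cosh_le_exp_quarter[of "s$2"] by (simp_all add: x1_def x2_def)
    moreover have "E = 1 + x1 + x2 + x1 * x2" unfolding E_eq by (simp add: algebra_simps)
    ultimately show ?thesis using x0 unfolding F_def by (simp add: add_divide_distrib)
  qed
  finally have "mgf_ratio s \<le> (E - F / 96) / E"
    unfolding mgf_ratio_def E_def by (simp add: exp_minus field_simps)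
  also have "\<dots> = 1 - F / (96 * E)" using E0 by (simp add: field_simps)
  also have "\<dots> \<le> 1 - k2 * F"
  proof -
    have "F / (96 * exp 16) \<le> F / (96 * E)"
      using E0 E16 unfolding F_def by (intro divide_left_mono) auto
    then show ?thesis unfolding k2_def by (simp add: exp_minus field_simps)
  qed
  also have "\<dots> \<le> exp (- k2 * F)" using exp_ge_add_one_self[of "- k2 * F"] by simp
  finally show ?thesis unfolding F_def .
qed

lemma integrable_exp_quartic_2:
  assumes k: "k > 0"
  shows "integrable lborel (\<lambda>t::real ^ 2. exp (- k * ((t$1) ^ 4 + (t$2) ^ 4)))"
proof (rule Bochner_Integration.integrable_bound)
  show "integrable lborel (\<lambda>t::real ^ 2. exp (k / 2) * exp (- k * (norm t) ^ 2))"
    using gauss_integrable[OF k] by simp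
  show "(\<lambda>t::real ^ 2. exp (- k * ((t$1) ^ 4 + (t$2) ^ 4))) \<in> borel_measurable lborel" by simp
  text \<open>Since \<open>x\<^sup>2 - 1/4 \<le> x\<^sup>4\<close>, quartic decay dominates Gaussian decay.\<close>
  have q: "x ^ 2 - 1/4 \<le> x ^ 4" for x :: real
    using zero_le_power2[of "x ^ 2 - 1/2"] by (simp add: power2_eq_square power4_eq_xxxx algebra_simps)
  have "- k * ((t$1) ^ 4 + (t$2) ^ 4) \<le> k / 2 + - k * (norm t) ^ 2" for t :: "real ^ 2"
  proof -
    have "(norm t) ^ 2 - 1/2 \<le> (t$1) ^ 4 + (t$2) ^ 4"
      unfolding norm_sq_2 using q[of "t$1"] q[of "t$2"] by linarith
    from mult_left_mono[OF this, of k] k show ?thesis by (simp add: algebra_simps)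
  qed
  then show "AE (t::real ^ 2) in lborel. norm (exp (- k * ((t$1) ^ 4 + (t$2) ^ 4)))
               \<le> norm (exp (k / 2) * exp (- k * (norm t) ^ 2))"
    by (intro AE_I2) (simp add: mult_exp_exp del: mult_minus_left)
qed

theorem srw_conv_psi2: "srw_conv (psi2 :: real ^ 2 \<Rightarrow> real)"
proof (rule srw_conv_if_near_bound[OF psi2_eq])
  show "(norm s) ^ 2 \<le> 16 * (real CARD(2)) ^ 2 \<Longrightarrow> mgf_ratio s \<le> exp (- (k2 * ((s$1) ^ 4 + (s$2) ^ 4)))"
    for s :: "real ^ 2" using mgf_ratio_near_2[of s] by simp
  show "integrable lborel (\<lambda>t::real ^ 2. exp (- (k2 * ((t$1) ^ 4 + (t$2) ^ 4))))"
    using integrable_exp_quartic_2[OF k2_pos] by simp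
qed (simp add: algebra_simps)

section \<open>Dimension three\<close>

text \<open>\<open>|t|\<^sup>4 - \<Sum> t\<^sub>i\<^sup>4 = 2 \<Sum>\<^sub>i\<^sub><\<^sub>j t\<^sub>i\<^sup>2 t\<^sub>j\<^sup>2\<close>; in dimension three the limit is \<open>exp (- cross_quartic / 72)\<close>.\<close>
definition cross_quartic :: "real ^ 'n::finite \<Rightarrow> real" where
  "cross_quartic t = (norm t) ^ 4 - (\<Sum>i\<in>UNIV. (t $ i) ^ 4)"

lemma cross_quartic_sum: "cross_quartic t = (\<Sum>l\<in>UNIV. (t $ l) ^ 2 * ((norm t) ^ 2 - (t $ l) ^ 2))"
proof -
  have "(norm t) ^ 4 = (norm t) ^ 2 * (\<Sum>l\<in>UNIV. (t $ l) ^ 2)"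
    by (simp add: norm_sq_sum[symmetric] flip: power_add)
  also have "\<dots> = (\<Sum>l\<in>UNIV. (t $ l) ^ 2 * (norm t) ^ 2)"
    by (simp add: sum_distrib_left mult.commute)
  finally have "(norm t) ^ 4 = (\<Sum>l\<in>UNIV. (t $ l) ^ 2 * (norm t) ^ 2)" .
  moreover have "(\<Sum>i\<in>UNIV. (t $ i) ^ 4) = (\<Sum>l\<in>UNIV. (t $ l) ^ 2 * (t $ l) ^ 2)"
    by (simp flip: power_add)
  ultimately show ?thesis unfolding cross_quartic_def by (simp add: sum_subtractf right_diff_distrib)
qed

lemma cross_quartic_ge_term: "(t $ i) ^ 2 * ((norm t) ^ 2 - (t $ i) ^ 2) \<le> cross_quartic t"
  and cross_quartic_nonneg: "0 \<le> cross_quartic t"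
proof -
  have nn: "0 \<le> (t $ l) ^ 2 * ((norm t) ^ 2 - (t $ l) ^ 2)" for l
    using component_sq_le_norm_sq[of t l] by simp
  show "(t $ i) ^ 2 * ((norm t) ^ 2 - (t $ i) ^ 2) \<le> cross_quartic t"
    unfolding cross_quartic_sum by (rule member_le_sum) (use nn in auto)
  show "0 \<le> cross_quartic t" unfolding cross_quartic_sum by (rule sum_nonneg) (use nn in auto)
qed

lemma cross_quartic_scale: "cross_quartic (c *\<^sub>R t) = c ^ 4 * cross_quartic t"
proof -
  have "(norm (c *\<^sub>R t)) ^ 4 = c ^ 4 * (norm t) ^ 4"
    by (simp add: power_mult_distrib)
  then show ?thesis unfolding cross_quartic_def
    by (simp add: power_mult_distrib sum_distrib_left right_diff_distrib)
qed

lemma Basis_cart: "(Basis :: (real ^ 'n::finite) set) = range (\<lambda>i. axis i 1)"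
  by (auto simp: Basis_vec_def)

lemma prod_Basis_cart:
  "(\<Prod>b\<in>(Basis :: (real ^ 'n::finite) set). g b) = (\<Prod>i\<in>UNIV. g (axis i 1))"
proof -
  have "inj (\<lambda>i. axis i (1::real) :: real ^ 'n)" by (auto intro: injI simp: axis_eq_axis)
  then show ?thesis unfolding Basis_cart by (simp add: prod.reindex)
qed

text \<open>Integrability of \<open>exp (- k cross_quartic)\<close> is proved through a dyadic decomposition.
  If \<open>|t\<^sub>i| \<in> [2\<^sup>j, 2\<^sup>j\<^sup>+\<^sup>1]\<close> then \<open>cross_quartic t \<ge> 4\<^sup>j \<Sum>\<^sub>l\<^sub>\<noteq>\<^sub>i t\<^sub>l\<^sup>2\<close>, so on that slab the function is
  below the product \<open>slab_factor\<close> of an indicator in direction \<open>i\<close> and Gaussians of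
  variance \<open>\<sim> 4\<^sup>-\<^sup>j\<close> in the other directions.\<close>
definition slab_factor :: "real \<Rightarrow> 'n::finite \<Rightarrow> nat \<Rightarrow> real ^ 'n \<Rightarrow> real \<Rightarrow> ennreal" where
  "slab_factor k i j b y = (if b = axis i 1 then indicator {-(2^(j+1))..2^(j+1)} y
                            else ennreal (exp (- (k * 4^j) * y ^ 2)))"

definition cross_majorant :: "real \<Rightarrow> real ^ 'n::finite \<Rightarrow> ennreal" where
  "cross_majorant k t = (\<Prod>b\<in>Basis. indicator {-1..1::real} (t \<bullet> b))
     + (\<Sum>i\<in>UNIV. \<Sum>j. \<Prod>b\<in>Basis. slab_factor k i j b (t \<bullet> b))"

lemma slab_factor_measurable: "slab_factor k i j b \<in> borel_measurable borel"
  unfolding slab_factor_def by (cases "b = axis i 1") simp_all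

lemma slab_factor_axis:
  "slab_factor k i j (axis l 1) y = (if l = i then indicator {-(2^(j+1))..2^(j+1)} y
                                     else ennreal (exp (- (k * 4^j) * y ^ 2)))"
  unfolding slab_factor_def by (simp add: axis_eq_axis)

lemma dyadic_bracket:
  fixes y :: real assumes "1 < y"
  shows "\<exists>j. 2 ^ j \<le> y \<and> y \<le> 2 ^ (j+1)"
proof -
  obtain n where n: "y < 2 ^ n" and least: "\<And>m. m < n \<Longrightarrow> \<not> y < 2 ^ m"
    using real_arch_pow[of 2 y] exists_least_iff[of "\<lambda>n. y < (2::real) ^ n"] by auto
  with assms obtain j where "n = Suc j" by (cases n) auto
  then show ?thesis using n least[of j] by (intro exI[of _ j]) simp
qed

lemma slab_product_eq:
  fixes t :: "real ^ 'n::finite"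
  assumes "\<bar>t $ i\<bar> \<le> 2 ^ (j+1)"
  shows "(\<Prod>b\<in>Basis. slab_factor k i j b (t \<bullet> b))
           = ennreal (exp (- (k * 4^j) * ((norm t) ^ 2 - (t $ i) ^ 2)))"
proof -
  have "(\<Prod>b\<in>Basis. slab_factor k i j b (t \<bullet> b))
      = slab_factor k i j (axis i 1) (t $ i) * (\<Prod>l\<in>UNIV - {i}. slab_factor k i j (axis l 1) (t $ l))"
    unfolding prod_Basis_cart cart_eq_inner_axis[symmetric] by (subst prod.remove[of UNIV i]) auto
  also have "slab_factor k i j (axis i 1) (t $ i) = 1"
    using assms by (simp add: slab_factor_axis indicator_def abs_le_iff)
  also have "(\<Prod>l\<in>UNIV - {i}. slab_factor k i j (axis l 1) (t $ l))
      = (\<Prod>l\<in>UNIV - {i}. ennreal (exp (- (k * 4^j) * (t $ l) ^ 2)))"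
    by (intro prod.cong) (auto simp: slab_factor_axis)
  also have "\<dots> = ennreal (exp (\<Sum>l\<in>UNIV - {i}. - (k * 4^j) * (t $ l) ^ 2))"
    by (simp add: prod_ennreal exp_sum)
  also have "(\<Sum>l\<in>UNIV - {i}. - (k * 4^j) * (t $ l) ^ 2) = - (k * 4^j) * ((norm t) ^ 2 - (t $ i) ^ 2)"
  proof -
    have "(\<Sum>l\<in>UNIV. (t $ l) ^ 2) = (t $ i) ^ 2 + (\<Sum>l\<in>UNIV - {i}. (t $ l) ^ 2)"
      by (subst sum.remove[of UNIV i]) auto
    then show ?thesis unfolding norm_sq_sum by (simp add: sum_negf sum_distrib_left)
  qed
  finally show ?thesis by simp
qed

lemma exp_cross_quartic_le_majorant:
  fixes t :: "real ^ 'n::finite" assumes k: "k > 0"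
  shows "ennreal (exp (- k * cross_quartic t)) \<le> cross_majorant k t"
proof (cases "\<forall>l. \<bar>t $ l\<bar> \<le> 1")
  case True
  have cube: "(\<Prod>b\<in>Basis. indicator {-1..1::real} (t \<bullet> b) :: ennreal) = 1"
    unfolding prod_Basis_cart using True
    by (intro prod.neutral) (auto simp: cart_eq_inner_axis[symmetric] indicator_def abs_le_iff)
  have "exp (- k * cross_quartic t) \<le> 1" using k cross_quartic_nonneg[of t] by simp
  then show ?thesis unfolding cross_majorant_def cube by (simp add: add_increasing2)
next
  case False
  then obtain i where i: "1 < \<bar>t $ i\<bar>" by (auto simp: not_le)
  obtain j where j1: "2 ^ j \<le> \<bar>t $ i\<bar>" and j2: "\<bar>t $ i\<bar> \<le> 2 ^ (j+1)"
    using dyadic_bracket[OF i] by blast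
  let ?rest = "(norm t) ^ 2 - (t $ i) ^ 2"
  note slab = slab_product_eq[OF j2, of k]
  have "4 ^ j * ?rest \<le> (t $ i) ^ 2 * ?rest"
  proof (rule mult_right_mono)
    have "((2::real) ^ j) ^ 2 \<le> \<bar>t $ i\<bar> ^ 2" using j1 by (intro power_mono) auto
    moreover have "(4::real) ^ j = (2 ^ j) ^ 2" by (simp add: power_mult_distrib[symmetric] power2_eq_square)
    ultimately show "4 ^ j \<le> (t $ i) ^ 2" by simp
  qed (use component_sq_le_norm_sq[of t i] in simp)
  also have "\<dots> \<le> cross_quartic t" by (rule cross_quartic_ge_term)
  finally have "ennreal (exp (- k * cross_quartic t)) \<le> (\<Prod>b\<in>Basis. slab_factor k i j b (t \<bullet> b))"
    unfolding slab using k by (simp add: mult.assoc)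
  also have "\<dots> \<le> (\<Sum>j. \<Prod>b\<in>Basis. slab_factor k i j b (t \<bullet> b))"
    using sum_le_suminf[OF summableI, of "{j}" "\<lambda>j. \<Prod>b\<in>Basis. slab_factor k i j b (t \<bullet> b)"] by simp
  also have "\<dots> \<le> (\<Sum>i\<in>UNIV. \<Sum>j. \<Prod>b\<in>Basis. slab_factor k i j b (t \<bullet> b))"
    by (rule member_le_sum) auto
  also have "\<dots> \<le> cross_majorant k t" unfolding cross_majorant_def by simp
  finally show ?thesis .
qed

lemma slab_factor_integral_same:
  "(\<integral>\<^sup>+y. slab_factor k i j (axis i 1) y \<partial>lborel) = ennreal (2 * 2 ^ (j+1))"
  by (simp add: slab_factor_axis)

lemma slab_factor_integral_other:
  assumes k: "k > 0" and l: "l \<noteq> i"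
  shows "(\<integral>\<^sup>+y. slab_factor k i j (axis l 1) y \<partial>lborel) = ennreal (sqrt (pi / k) / 2 ^ j)"
proof -
  have "(4::real) ^ j = 2 ^ j * 2 ^ j" by (simp add: power_mult_distrib[symmetric])
  then have "sqrt (pi / (k * 4 ^ j)) = sqrt (pi / k) / 2 ^ j"
    by (simp add: real_sqrt_divide real_sqrt_mult)
  then show ?thesis
    unfolding slab_factor_axis using l gauss_integral_1d[of "k * 4 ^ j"] k by simp
qed

text \<open>The integral of the \<open>(i, j)\<close> slab term: \<open>2\<^sup>j\<^sup>+\<^sup>2 (\<pi>/(k 4\<^sup>j))\<^sup>(\<^sup>d\<^sup>-\<^sup>1\<^sup>)\<^sup>/\<^sup>2\<close>; it decays like
  \<open>2\<^sup>-\<^sup>j\<close> exactly when \<open>d \<ge> 3\<close>, which is where the dimension enters.\<close>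
lemma slab_integral_le:
  fixes i :: "'n::finite" assumes k: "k > 0" and d: "CARD('n) \<ge> 3"
  defines "C \<equiv> 4 * sqrt (pi / k) ^ (CARD('n) - 1)"
  shows "(\<integral>\<^sup>+t. (\<Prod>b\<in>Basis. slab_factor k i j b ((t::real ^ 'n) \<bullet> b)) \<partial>lborel)
           \<le> ennreal (C * (1/2) ^ j)"
proof -
  define m where "m = CARD('n) - 1"
  define g where "g = sqrt (pi / k) / 2 ^ j"
  have m2: "2 \<le> m" using d unfolding m_def by simp
  have card_rest: "card (UNIV - {i}) = m" unfolding m_def by (simp add: card_Diff_singleton)
  have gauss: "(\<integral>\<^sup>+y. slab_factor k i j (axis l 1) y \<partial>lborel) = ennreal g" if "l \<noteq> i" for l
    unfolding g_def using slab_factor_integral_other[OF k that] .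
  have "(\<integral>\<^sup>+t. (\<Prod>b\<in>Basis. slab_factor k i j b ((t::real ^ 'n) \<bullet> b)) \<partial>lborel)
      = (\<Prod>l\<in>UNIV. (\<integral>\<^sup>+y. slab_factor k i j (axis l 1) y \<partial>lborel))"
    by (subst nn_integral_lborel_prod) (auto simp: slab_factor_measurable prod_Basis_cart)
  also have "\<dots> = (\<integral>\<^sup>+y. slab_factor k i j (axis i 1) y \<partial>lborel)
                  * (\<Prod>l\<in>UNIV - {i}. (\<integral>\<^sup>+y. slab_factor k i j (axis l 1) y \<partial>lborel))"
    by (subst prod.remove[of UNIV i]) auto
  also have "(\<Prod>l\<in>UNIV - {i}. (\<integral>\<^sup>+y. slab_factor k i j (axis l 1) y \<partial>lborel))
      = (\<Prod>l\<in>UNIV - {i}. ennreal g)"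
    by (intro prod.cong refl gauss) auto
  also note slab_factor_integral_same
  also have "ennreal (2 * 2 ^ (j+1)) * (\<Prod>l\<in>UNIV - {i}. ennreal g) = ennreal (2 * 2 ^ (j+1) * g ^ m)"
    using k card_rest by (simp add: g_def prod_ennreal ennreal_mult ennreal_power)
  also have "2 * 2 ^ (j+1) * g ^ m \<le> C * (1/2) ^ j"
  proof -
    have "(1 / 2 ^ j :: real) ^ m \<le> (1 / 2 ^ j) ^ 2" by (rule power_decreasing[OF m2]) auto
    moreover have "g ^ m = sqrt (pi / k) ^ m * (1 / 2 ^ j) ^ m"
      unfolding g_def by (simp add: power_divide)
    ultimately have "g ^ m \<le> sqrt (pi / k) ^ m * (1 / 2 ^ j) ^ 2"
      using k by (simp add: mult_left_mono)
    then have "2 * 2 ^ (j+1) * g ^ m \<le> 2 * 2 ^ (j+1) * (sqrt (pi / k) ^ m * (1 / 2 ^ j) ^ 2)"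
      by (intro mult_left_mono) auto
    also have "\<dots> = C * (1/2) ^ j"
      unfolding C_def m_def by (simp add: field_simps power2_eq_square)
    finally show ?thesis .
  qed
  finally show ?thesis by (simp add: ennreal_leI)
qed

lemma cross_majorant_integral_finite:
  assumes k: "k > 0" and d: "CARD('n::finite) \<ge> 3"
  shows "(\<integral>\<^sup>+t. cross_majorant k (t::real ^ 'n) \<partial>lborel) < \<infinity>"
proof -
  define C where "C = 4 * sqrt (pi / k) ^ (CARD('n) - 1)"
  have slab_meas: "(\<lambda>t::real ^ 'n. \<Prod>b\<in>Basis. slab_factor k i j b (t \<bullet> b)) \<in> borel_measurable lborel"
    for i j using slab_factor_measurable by measurable
  have row_meas: "(\<lambda>t::real ^ 'n. \<Sum>j. \<Prod>b\<in>Basis. slab_factor k i j b (t \<bullet> b)) \<in> borel_measurable lborel"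
    for i using slab_factor_measurable by measurable
  have cube: "(\<integral>\<^sup>+t. (\<Prod>b\<in>Basis. indicator {-1..1::real} ((t::real ^ 'n) \<bullet> b) :: ennreal) \<partial>lborel) < \<infinity>"
  proof -
    have "(\<integral>\<^sup>+t. (\<Prod>b\<in>Basis. indicator {-1..1::real} ((t::real ^ 'n) \<bullet> b) :: ennreal) \<partial>lborel)
        = (\<Prod>b\<in>(Basis::(real ^ 'n) set). ennreal 2)"
      by (subst nn_integral_lborel_prod) auto
    also have "\<dots> < \<infinity>" by (subst prod_ennreal) auto
    finally show ?thesis .
  qed
  have geom: "(\<Sum>j. ennreal (C * (1/2) ^ j)) < \<infinity>"
  proof -
    have "summable (\<lambda>j. C * (1/2::real) ^ j)" by (intro summable_mult summable_geometric) simp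
    then have "(\<Sum>j. ennreal (C * (1/2) ^ j)) \<noteq> \<top>"
      unfolding C_def using k by (intro ennreal_suminf_neq_top) (auto intro!: mult_nonneg_nonneg zero_le_power)
    then show ?thesis by (simp add: less_top)
  qed
  have row: "(\<integral>\<^sup>+t. (\<Sum>j. \<Prod>b\<in>Basis. slab_factor k i j b ((t::real ^ 'n) \<bullet> b)) \<partial>lborel) < \<infinity>" for i
  proof -
    have "(\<integral>\<^sup>+t. (\<Sum>j. \<Prod>b\<in>Basis. slab_factor k i j b ((t::real ^ 'n) \<bullet> b)) \<partial>lborel)
        = (\<Sum>j. \<integral>\<^sup>+t. (\<Prod>b\<in>Basis. slab_factor k i j b ((t::real ^ 'n) \<bullet> b)) \<partial>lborel)"
      by (rule nn_integral_suminf[OF slab_meas])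
    also have "\<dots> \<le> (\<Sum>j. ennreal (C * (1/2) ^ j))"
      unfolding C_def by (intro suminf_le slab_integral_le[OF k d] summableI)
    finally show ?thesis using geom by (simp add: le_less_trans)
  qed
  have "(\<integral>\<^sup>+t. cross_majorant k (t::real ^ 'n) \<partial>lborel)
      = (\<integral>\<^sup>+t. (\<Prod>b\<in>Basis. indicator {-1..1::real} ((t::real ^ 'n) \<bullet> b) :: ennreal) \<partial>lborel)
        + (\<Sum>i\<in>UNIV. \<integral>\<^sup>+t. (\<Sum>j. \<Prod>b\<in>Basis. slab_factor k i j b ((t::real ^ 'n) \<bullet> b)) \<partial>lborel)"
    unfolding cross_majorant_def
    by (subst nn_integral_add) (use row_meas in \<open>auto intro!: nn_integral_sum\<close>)
  also have "\<dots> < \<infinity>" using cube row by (simp add: less_top)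
  finally show ?thesis .
qed

lemma integrable_exp_cross_quartic:
  assumes k: "k > 0" and d: "CARD('n::finite) \<ge> 3"
  shows "integrable lborel (\<lambda>t::real ^ 'n. exp (- k * cross_quartic t))"
proof (rule integrableI_nonneg)
  have "continuous_on UNIV (\<lambda>t::real ^ 'n. exp (- k * cross_quartic t))"
    unfolding cross_quartic_def by (intro continuous_intros)
  then show "(\<lambda>t::real ^ 'n. exp (- k * cross_quartic t)) \<in> borel_measurable lborel"
    by (simp add: borel_measurable_continuous_onI)
  have "(\<integral>\<^sup>+t. ennreal (exp (- k * cross_quartic (t::real ^ 'n))) \<partial>lborel)
      \<le> (\<integral>\<^sup>+t. cross_majorant k (t::real ^ 'n) \<partial>lborel)"
    by (intro nn_integral_mono exp_cross_quartic_le_majorant[OF k])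
  also have "\<dots> < \<infinity>" by (rule cross_majorant_integral_finite[OF k d])
  finally show "(\<integral>\<^sup>+t. ennreal (exp (- k * cross_quartic (t::real ^ 'n))) \<partial>lborel) < \<infinity>" .
qed simp

lemma norm_sq_3: "(norm (t::real ^ 3)) ^ 2 = (t$1) ^ 2 + (t$2) ^ 2 + (t$3) ^ 2"
  unfolding norm_sq_sum by (simp add: sum_3)

lemma cross_quartic_3:
  "cross_quartic (t::real ^ 3) = 2 * ((t$1)\<^sup>2 * (t$2)\<^sup>2 + (t$1)\<^sup>2 * (t$3)\<^sup>2 + (t$2)\<^sup>2 * (t$3)\<^sup>2)"
proof -
  have "(norm t) ^ 4 = ((t$1) ^ 2 + (t$2) ^ 2 + (t$3) ^ 2) ^ 2"
    by (simp add: norm_sq_3 flip: norm_sq_3 power_mult)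
  then show ?thesis unfolding cross_quartic_def
    by (simp add: sum_3 field_simps power2_eq_square power4_eq_xxxx)
qed

text \<open>In dimension three \<open>24 d = 8 d\<^sup>2\<close>, so the limit exponent is \<open>- cross_quartic / 72\<close>.\<close>
lemma quartic_form_3: "quartic_form (t::real ^ 3) = - cross_quartic t / 72"
  unfolding quartic_form_def cross_quartic_def by (simp add: field_simps)

lemma psi3_eq: "psi3 t = exp (quartic_form t)"
  unfolding psi3_def quartic_form_3 cross_quartic_3 by simp

definition k3 :: real where "k3 = exp (-24) / 72"

lemma k3_pos: "k3 > 0" unfolding k3_def by simp

text \<open>In space the quartic term of \<open>cosh\<close> cancels against the Gaussian normalisation,
  but the mixed terms of \<open>exp (|s|\<^sup>2/6) = \<Prod> (1 + x\<^sub>i)\<close> still give decay in \<open>cross_quartic\<close>.\<close>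
lemma mgf_ratio_near_3:
  fixes s :: "real ^ 3"
  assumes small: "(norm s) ^ 2 \<le> 144"
  shows "mgf_ratio s \<le> exp (- k3 * cross_quartic s)"
proof -
  define a1 a2 a3 where "a1 = (s$1) ^ 2" and "a2 = (s$2) ^ 2" and "a3 = (s$3) ^ 2"
  define x1 x2 x3 where "x1 = exp (a1 / 6) - 1" and "x2 = exp (a2 / 6) - 1" and "x3 = exp (a3 / 6) - 1"
  define E where "E = exp ((norm s) ^ 2 / 6)"
  have a0: "0 \<le> a1" "0 \<le> a2" "0 \<le> a3" unfolding a1_def a2_def a3_def by simp_all
  have xa: "a1 / 6 \<le> x1" "a2 / 6 \<le> x2" "a3 / 6 \<le> x3"
    unfolding x1_def x2_def x3_def using exp_ge_add_one_self by (smt (verit))+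
  have E_eq: "E = (1 + x1) * (1 + x2) * (1 + x3)"
    unfolding E_def x1_def x2_def x3_def a1_def a2_def a3_def norm_sq_3
    by (simp add: add_divide_distrib exp_add)
  have E0: "E > 0" and E24: "E \<le> exp 24" unfolding E_def using small by simp_all
  have "step_mgf s = (cosh (s$1) + cosh (s$2) + cosh (s$3)) / 3"
    unfolding step_mgf_def by (simp add: sum_3)
  also have "\<dots> \<le> 1 + x1 + x2 + x3"
    using cosh_le_exp_sixth[of "s$1"] cosh_le_exp_sixth[of "s$2"] cosh_le_exp_sixth[of "s$3"]
    unfolding x1_def x2_def x3_def a1_def a2_def a3_def by simp
  also have "\<dots> \<le> E - cross_quartic s / 72"
  proof -
    have "(a1/6) * (a2/6) \<le> x1 * x2" "(a1/6) * (a3/6) \<le> x1 * x3" "(a2/6) * (a3/6) \<le> x2 * x3"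
      using xa a0 by (intro mult_mono; linarith)+
    moreover have "0 \<le> x1 * x2 * x3" using xa a0 by simp
    moreover have "E = 1 + x1 + x2 + x3 + (x1 * x2 + x1 * x3 + x2 * x3) + x1 * x2 * x3"
      unfolding E_eq by (simp add: algebra_simps)
    moreover have "cross_quartic s / 72 = (a1 * a2 + a1 * a3 + a2 * a3) / 36"
      unfolding cross_quartic_3 a1_def a2_def a3_def by simp
    ultimately show ?thesis by (simp add: add_divide_distrib)
  qed
  finally have "mgf_ratio s \<le> (E - cross_quartic s / 72) / E"
    unfolding mgf_ratio_def E_def by (simp add: exp_minus field_simps)
  also have "\<dots> = 1 - cross_quartic s / (72 * E)" using E0 by (simp add: field_simps)
  also have "\<dots> \<le> 1 - k3 * cross_quartic s"
  proof -
    have "cross_quartic s / (72 * exp 24) \<le> cross_quartic s / (72 * E)"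
      using E0 E24 cross_quartic_nonneg[of s] by (intro divide_left_mono) auto
    then show ?thesis unfolding k3_def by (simp add: exp_minus field_simps)
  qed
  also have "\<dots> \<le> exp (- k3 * cross_quartic s)"
    using exp_ge_add_one_self[of "- k3 * cross_quartic s"] by simp
  finally show ?thesis .
qed

theorem srw_conv_psi3: "srw_conv (psi3 :: real ^ 3 \<Rightarrow> real)"
proof (rule srw_conv_if_near_bound[OF psi3_eq])
  show "(norm s) ^ 2 \<le> 16 * (real CARD(3)) ^ 2 \<Longrightarrow> mgf_ratio s \<le> exp (- (k3 * cross_quartic s))"
    for s :: "real ^ 3" using mgf_ratio_near_3[of s] by simp
  show "integrable lborel (\<lambda>t::real ^ 3. exp (- (k3 * cross_quartic t)))"
    using integrable_exp_cross_quartic[OF k3_pos, where 'n = 3] by simp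
qed (simp add: cross_quartic_scale)

theorem mainTheorem7:
  shows "srw_conv (psi2 :: real ^ 2 \<Rightarrow> real) \<and> srw_conv (psi3 :: real ^ 3 \<Rightarrow> real)"
  using srw_conv_psi2 srw_conv_psi3 by blast

end
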